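(* Let $\Lambda$ be a net of quadrics in $\mathbb{P}^5$. For each $i\in\{1,\dots,5\}$, $\Lambda$ fails to be stable with respect to some one-parameter subgroup of numerical type $\rho_i$ if and only if there is a complete flag $F_0\subset F_1\subset F_2\subset F_3\subset F_4\subset\mathbb{P}^5$ of linear subspaces ($\dim F_j=j$) such that the corresponding condition holds: (1) $\rho_1=(1,1,1,1,1,-5)$: some element of $\Lambda$ contains $F_4$. (2) $\rho_2=(1,1,1,1,-2,-2)$: (a) some pencil in $\Lambda$ contains $F_3$, or (b) some element of $\Lambda$ is singular along $F_3$. (3) $\rho_3=(1,1,1,-1,-1,-1)$: (a) $\Lambda$ contains $F_2$, or (b) some pencil in $\Lambda$ contains $F_2$ and an element of that pencil is singular along $F_2$. (4) $\rho_4=(2,2,-1,-1,-1,-1)$: (a) $\Lambda$ contains $F_1$ and some element of $\Lambda$ is singular along $F_1$, or (b) some pencil in $\Lambda$ is singular along $F_1$. (5) $\rho_5=(5,-1,-1,-1,-1,-1)$: $\Lambda$ contains $F_0$ and some pencil in $\Lambda$ is singular at $F_0$.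
   Context: A net of quadrics in $\mathbb{P}^5$ is a $3$-dimensional subspace $\Lambda$ of the space $W$ of quadratic forms on $\mathbb{C}^6$, viewed in $Gr(3,W)\subset\mathbb{P}(\bigwedge^3W)$ with $SL(6)$-action. A 1-PS of numerical type $(a_0,\dots,a_5)$ acts diagonally on some basis $x_0,\dots,x_5$ of linear forms with these weights; the weight of $x_ix_j$ is $a_i+a_j$, that of a Plücker coordinate $x_{i_1}x_{j_1}\wedge x_{i_2}x_{j_2}\wedge x_{i_3}x_{j_3}$ is the sum of monomial weights; $\Lambda$ is stable w.r.t. $\rho$ if some Plücker coordinate not vanishing on $\Lambda$ has positive $\rho$-weight. A pencil in $\Lambda$ is a $2$-dimensional subspace; "a pencil (resp. $\Lambda$) contains/is singular along $F$" means every quadric in it contains $F$ / is singular along $F$. (The flag corresponds to a basis via $F_j=\{x_{j+1}=\dots=x_5=0\}$.) *)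

theory Defs
  imports Complex_Main "Jordan_Normal_Form.Determinant"
begin

definition quad :: "complex mat \<Rightarrow> complex vec \<Rightarrow> complex" where
  "quad A v = v \<bullet> (A *\<^sub>v v)"

definition sym6 :: "complex mat \<Rightarrow> bool" where
  "sym6 A \<longleftrightarrow> A \<in> carrier_mat 6 6 \<and> transpose_mat A = A"

(* A basis of C^6 is given by the columns of an invertible matrix M; the dual basis
   of linear forms x_0..x_5 are the coordinates w.r.t. it (v = M x).
   F_j = {x_(j+1) = ... = x_5 = 0} (as linear subspace of C^6, i.e. affine cone). *)
definition flagsp :: "complex mat \<Rightarrow> nat \<Rightarrow> complex vec set" where
  "flagsp M j = {M *\<^sub>v x | x. x \<in> carrier_vec 6 \<and> (\<forall>k. j < k \<and> k < 6 \<longrightarrow> x $ k = 0)}"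

definition contains :: "complex mat \<Rightarrow> complex vec set \<Rightarrow> bool" where
  "contains A F \<longleftrightarrow> (\<forall>v\<in>F. quad A v = 0)"

(* singular along F: the gradient 2 A v vanishes at every point of F *)
definition sing_along :: "complex mat \<Rightarrow> complex vec set \<Rightarrow> bool" where
  "sing_along A F \<longleftrightarrow> (\<forall>v\<in>F. A *\<^sub>v v = 0\<^sub>v 6)"

(* coefficient of the monomial x_i x_j (i \<le> j) of q_A in the coordinates x = M^-1 v *)
definition qcoeff :: "complex mat \<Rightarrow> complex mat \<Rightarrow> nat \<times> nat \<Rightarrow> complex" where
  "qcoeff M A m = (case m of (i, j) \<Rightarrow>
     (if i = j then 1 else 2) * (transpose_mat M * A * M) $$ (i, j))"

definition monomials :: "(nat \<times> nat) set" where
  "monomials = {(i, j). i \<le> j \<and> j < 6}"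

definition mweight :: "int list \<Rightarrow> nat \<times> nat \<Rightarrow> int" where
  "mweight a m = (case m of (i, j) \<Rightarrow> a ! i + a ! j)"

(* Pluecker coordinate x_m1 \<and> x_m2 \<and> x_m3 of Q1 \<and> Q2 \<and> Q3 in the basis M *)
definition plucker :: "complex mat \<Rightarrow> complex mat \<Rightarrow> complex mat \<Rightarrow> complex mat
    \<Rightarrow> nat \<times> nat \<Rightarrow> nat \<times> nat \<Rightarrow> nat \<times> nat \<Rightarrow> complex" where
  "plucker M Q1 Q2 Q3 m1 m2 m3 =
     det (mat 3 3 (\<lambda>(k, l). qcoeff M ([Q1, Q2, Q3] ! k) ([m1, m2, m3] ! l)))"

(* stable w.r.t. the 1-PS with weights a acting diagonally on the basis M *)
definition stable_wrt :: "int list \<Rightarrow> complex mat \<Rightarrow> complex mat \<Rightarrow> complex mat \<Rightarrow> complex mat \<Rightarrow> bool" where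
  "stable_wrt a M Q1 Q2 Q3 \<longleftrightarrow>
     (\<exists>m1\<in>monomials. \<exists>m2\<in>monomials. \<exists>m3\<in>monomials. distinct [m1, m2, m3] \<and>
        plucker M Q1 Q2 Q3 m1 m2 m3 \<noteq> 0 \<and>
        mweight a m1 + mweight a m2 + mweight a m3 > 0)"

definition not_stable_some_1PS :: "int list \<Rightarrow> complex mat \<Rightarrow> complex mat \<Rightarrow> complex mat \<Rightarrow> bool" where
  "not_stable_some_1PS a Q1 Q2 Q3 \<longleftrightarrow>
     (\<exists>M \<in> carrier_mat 6 6. invertible_mat M \<and> \<not> stable_wrt a M Q1 Q2 Q3)"

definition span3 :: "complex mat \<Rightarrow> complex mat \<Rightarrow> complex mat \<Rightarrow> complex mat set" where
  "span3 Q1 Q2 Q3 = {a \<cdot>\<^sub>m Q1 + b \<cdot>\<^sub>m Q2 + c \<cdot>\<^sub>m Q3 | a b c. True}"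

definition indep3 :: "complex mat \<Rightarrow> complex mat \<Rightarrow> complex mat \<Rightarrow> bool" where
  "indep3 Q1 Q2 Q3 \<longleftrightarrow> (\<forall>a b c. a \<cdot>\<^sub>m Q1 + b \<cdot>\<^sub>m Q2 + c \<cdot>\<^sub>m Q3 = 0\<^sub>m 6 6
      \<longrightarrow> a = 0 \<and> b = 0 \<and> c = 0)"

definition span2 :: "complex mat \<Rightarrow> complex mat \<Rightarrow> complex mat set" where
  "span2 P1 P2 = {a \<cdot>\<^sub>m P1 + b \<cdot>\<^sub>m P2 | a b. True}"

definition pencil_in :: "complex mat set \<Rightarrow> complex mat set \<Rightarrow> bool" where
  "pencil_in \<Lambda> P \<longleftrightarrow> (\<exists>P1 P2. P1 \<in> \<Lambda> \<and> P2 \<in> \<Lambda> \<and>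
      (\<forall>a b. a \<cdot>\<^sub>m P1 + b \<cdot>\<^sub>m P2 = 0\<^sub>m 6 6 \<longrightarrow> a = 0 \<and> b = 0) \<and> P = span2 P1 P2)"

definition elem :: "complex mat \<Rightarrow> complex mat set \<Rightarrow> bool" where
  "elem A S \<longleftrightarrow> A \<in> S \<and> A \<noteq> 0\<^sub>m 6 6"

definition has_flag :: "(((nat \<Rightarrow> complex vec set)) \<Rightarrow> bool) \<Rightarrow> bool" where
  "has_flag C \<longleftrightarrow> (\<exists>M \<in> carrier_mat 6 6. invertible_mat M \<and> C (flagsp M))"

end

(*
  Write the three quadrics in the basis of the flag. For each monomial x_p x_q (p <= q) their
  three coefficients form a vector g(x_p x_q) in C^3, and the Pluecker coordinate of three
  monomials is the determinant of their vectors. So the net is not stable for rho in this basis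
  iff every triple of monomials of positive total weight has linearly dependent vectors.

  The weights of each rho_i on monomials take just three values, so this reduces to rank
  conditions on the vectors of certain sets of monomials: rank <= 2 means a nonzero w in C^3
  is orthogonal to them, i.e. the member w_0 Q_1 + w_1 Q_2 + w_2 Q_3 has those coefficients
  zero; rank <= 1 gives a pencil of such members; rank 0 gives all of the net. The coefficients
  with both indices <= j vanish iff the quadric contains F_j, those with the smaller index
  <= j vanish iff it is singular along F_j. Since Q_1, Q_2, Q_3 are independent, the vectors of
  all monomials span C^3; this turns vanishing minors into parallelism or vanishing of columns
  in the cases rho_3, rho_4, rho_5.
*)

theory Submission
  imports Defs
begin

section \<open>Vectors in \<open>\<complex>\<^sup>3\<close>\<close>

text \<open>A vector of \<open>\<complex>\<^sup>3\<close> is a function on the indices 0, 1, 2; its values elsewhere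
  are irrelevant.\<close>

type_synonym cvec3 = "nat \<Rightarrow> complex"

definition dot3 :: "cvec3 \<Rightarrow> cvec3 \<Rightarrow> complex" where
  "dot3 u v = u 0 * v 0 + u 1 * v 1 + u 2 * v 2"

definition cross3 :: "cvec3 \<Rightarrow> cvec3 \<Rightarrow> cvec3" where
  "cross3 u v = (\<lambda>i. if i = 0 then u 1 * v 2 - u 2 * v 1
      else if i = 1 then u 2 * v 0 - u 0 * v 2 else u 0 * v 1 - u 1 * v 0)"

definition triple :: "cvec3 \<Rightarrow> cvec3 \<Rightarrow> cvec3 \<Rightarrow> complex" where
  "triple u v w = dot3 u (cross3 v w)"

definition nonzero3 :: "cvec3 \<Rightarrow> bool" where
  "nonzero3 u \<longleftrightarrow> u 0 \<noteq> 0 \<or> u 1 \<noteq> 0 \<or> u 2 \<noteq> 0"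

definition unit3 :: "nat \<Rightarrow> cvec3" where
  "unit3 i = (\<lambda>k. if k = i then 1 else 0)"

definition lincomb3 :: "complex \<Rightarrow> cvec3 \<Rightarrow> complex \<Rightarrow> cvec3 \<Rightarrow> cvec3" where
  "lincomb3 a u b v = (\<lambda>i. a * u i + b * v i)"

lemma le_2_iff: "(i::nat) \<le> 2 \<longleftrightarrow> i = 0 \<or> i = 1 \<or> i = 2"
  by auto

lemma dot3_commute: "dot3 u v = dot3 v u"
  by (simp add: dot3_def algebra_simps)

lemma dot3_cross3_self [simp]: "dot3 u (cross3 u v) = 0" "dot3 v (cross3 u v) = 0"
  by (simp_all add: dot3_def cross3_def algebra_simps)

lemma dot3_lincomb3: "dot3 (lincomb3 a u b v) w = a * dot3 u w + b * dot3 v w"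
  by (simp add: dot3_def lincomb3_def algebra_simps)

lemma triple_rotate: "triple u v w = dot3 w (cross3 u v)"
  by (simp add: triple_def dot3_def cross3_def algebra_simps)

lemma triple_repeat [simp]: "triple u u w = 0" "triple u w u = 0" "triple w u u = 0"
  by (simp_all add: triple_def dot3_def cross3_def algebra_simps)

lemma triple_mult_component:
  assumes "i \<le> 2"
  shows "triple u v w * n i =
    dot3 n u * cross3 v w i + dot3 n v * cross3 w u i + dot3 n w * cross3 u v i"
  using assms by (auto simp: le_2_iff triple_def dot3_def cross3_def algebra_simps)

lemma cross3_cross3_left:
  assumes "i \<le> 2"
  shows "cross3 (cross3 n n') u i = n' i * dot3 n u - n i * dot3 n' u"
  using assms by (auto simp: le_2_iff dot3_def cross3_def algebra_simps)

lemma cross3_cross3_right: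
  assumes "i \<le> 2"
  shows "cross3 w (cross3 u v) i = u i * dot3 w v - v i * dot3 w u"
  using assms by (auto simp: le_2_iff dot3_def cross3_def algebra_simps)

lemma nonzero3_iff_component: "nonzero3 u \<longleftrightarrow> (\<exists>i\<le>2. u i \<noteq> 0)"
  by (auto simp: nonzero3_def le_2_iff)

lemma not_nonzero3_cross3 [simp]:
  "\<not> nonzero3 u \<Longrightarrow> \<not> nonzero3 (cross3 u v)" "\<not> nonzero3 u \<Longrightarrow> \<not> nonzero3 (cross3 v u)"
  by (auto simp: nonzero3_def cross3_def)

lemma triple_eq_0_if_parallel:
  assumes "\<not> nonzero3 (cross3 u v)"
  shows "triple u v w = 0" "triple w u v = 0" "triple u w v = 0"
proof -
  have "dot3 w (cross3 u v) = 0"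
    using assms by (simp add: nonzero3_def dot3_def)
  moreover have "triple u v w = dot3 w (cross3 u v)" "triple w u v = dot3 w (cross3 u v)"
    "triple u w v = - dot3 w (cross3 u v)"
    by (simp_all add: triple_def dot3_def cross3_def algebra_simps)
  ultimately show "triple u v w = 0" "triple w u v = 0" "triple u w v = 0"
    by simp_all
qed

lemma triple_eq_0_if_zero:
  assumes "\<not> nonzero3 u"
  shows "triple u v w = 0" "triple v u w = 0" "triple v w u = 0"
  using assms triple_eq_0_if_parallel by auto

lemma triple_eq_0_if_common_annihilator:
  assumes "nonzero3 n" "dot3 n u = 0" "dot3 n v = 0" "dot3 n w = 0"
  shows "triple u v w = 0"
proof -
  have "triple u v w * n i = 0" if "i \<le> 2" for i
    using triple_mult_component[OF that] assms by simp
  then show ?thesis using assms(1) unfolding nonzero3_iff_component by fastforce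
qed

lemma parallel3_multiple:
  assumes "nonzero3 u" "\<not> nonzero3 (cross3 u v)"
  obtains l where "\<And>i. i \<le> 2 \<Longrightarrow> v i = l * u i"
proof -
  have e: "u 1 * v 2 = u 2 * v 1" "u 2 * v 0 = u 0 * v 2" "u 0 * v 1 = u 1 * v 0"
    using assms(2) by (auto simp: nonzero3_def cross3_def)
  obtain k where k: "k \<le> 2" "u k \<noteq> 0" using assms(1) unfolding nonzero3_iff_component by blast
  have "v i = v k / u k * u i" if "i \<le> 2" for i
    using k that e by (auto simp: le_2_iff field_simps)
  then show ?thesis using that by blast
qed

lemma dot3_eq_0_if_parallel:
  assumes "nonzero3 u" "\<not> nonzero3 (cross3 u v)" "dot3 n u = 0"
  shows "dot3 n v = 0"
proof -
  obtain l where "\<And>i. i \<le> 2 \<Longrightarrow> v i = l * u i" using parallel3_multiple[OF assms(1,2)] by blast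
  then have "dot3 n v = l * dot3 n u" by (simp add: dot3_def algebra_simps)
  with assms(3) show ?thesis by simp
qed

lemma parallel3_trans:
  assumes "nonzero3 u" "\<not> nonzero3 (cross3 u v)" "\<not> nonzero3 (cross3 u w)"
  shows "\<not> nonzero3 (cross3 v w)"
proof -
  obtain l where "\<And>i. i \<le> 2 \<Longrightarrow> v i = l * u i" using parallel3_multiple[OF assms(1,2)] by blast
  moreover obtain k where "\<And>i. i \<le> 2 \<Longrightarrow> w i = k * u i"
    using parallel3_multiple[OF assms(1,3)] by blast
  ultimately show ?thesis by (simp add: nonzero3_def cross3_def algebra_simps)
qed

lemma nonzero3_cross3_iff_independent:
  "nonzero3 (cross3 u v) \<longleftrightarrow> (\<forall>a b. \<not> nonzero3 (lincomb3 a u b v) \<longrightarrow> a = 0 \<and> b = 0)"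
proof
  assume c: "nonzero3 (cross3 u v)"
  show "\<forall>a b. \<not> nonzero3 (lincomb3 a u b v) \<longrightarrow> a = 0 \<and> b = 0"
  proof (intro allI impI)
    fix a b assume z: "\<not> nonzero3 (lincomb3 a u b v)"
    have "cross3 (lincomb3 a u b v) v = (\<lambda>i. a * cross3 u v i)"
      "cross3 u (lincomb3 a u b v) = (\<lambda>i. b * cross3 u v i)"
      by (auto simp: cross3_def lincomb3_def algebra_simps)
    then have "\<not> nonzero3 (\<lambda>i. a * cross3 u v i)" "\<not> nonzero3 (\<lambda>i. b * cross3 u v i)"
      using z by (metis not_nonzero3_cross3(1), metis not_nonzero3_cross3(2))
    then show "a = 0 \<and> b = 0" using c unfolding nonzero3_def by auto
  qed
next
  assume H: "\<forall>a b. \<not> nonzero3 (lincomb3 a u b v) \<longrightarrow> a = 0 \<and> b = 0"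
  show "nonzero3 (cross3 u v)"
  proof (rule ccontr)
    assume c: "\<not> nonzero3 (cross3 u v)"
    show False
    proof (cases "nonzero3 u")
      case True
      then obtain l where "\<And>i. i \<le> 2 \<Longrightarrow> v i = l * u i" using parallel3_multiple c by blast
      then have "\<not> nonzero3 (lincomb3 l u (-1) v)" by (simp add: nonzero3_def lincomb3_def)
      then show False using H by force
    next
      case False
      then have "\<not> nonzero3 (lincomb3 1 u 0 v)" by (simp add: nonzero3_def lincomb3_def)
      then show False using H by force
    qed
  qed
qed

lemma ex_nonzero_cross3_unit3: "nonzero3 u \<Longrightarrow> \<exists>i. nonzero3 (cross3 u (unit3 i))"
  by (auto simp: nonzero3_def cross3_def unit3_def)

lemma ex_independent_annihilator:
  assumes "nonzero3 u" "nonzero3 v" "dot3 v u = 0"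
  obtains v' where "dot3 v' u = 0" "nonzero3 (cross3 v v')"
proof -
  obtain i where i: "i \<le> 2" "v i \<noteq> 0" using assms(2) unfolding nonzero3_iff_component by blast
  let ?v' = "cross3 u (unit3 i)"
  have "dot3 v (unit3 i) = v i" using i by (auto simp: le_2_iff dot3_def unit3_def)
  then have "cross3 v ?v' j = v i * u j" if "j \<le> 2" for j
    using cross3_cross3_right[OF that, of v u "unit3 i"] assms(3) by simp
  then have "nonzero3 (cross3 v ?v')" using assms(1) i by (auto simp: nonzero3_iff_component)
  moreover have "dot3 ?v' u = 0" by (simp add: dot3_commute)
  ultimately show ?thesis using that by blast
qed

section \<open>Annihilators of families of vectors\<close>

text \<open>For the family \<open>g\<close> of coefficient columns of a net, \<open>annihilates n g S\<close> says that the member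
  \<open>n\<^sub>0 Q\<^sub>1 + n\<^sub>1 Q\<^sub>2 + n\<^sub>2 Q\<^sub>3\<close> has zero coefficient at every monomial of \<open>S\<close>.\<close>

definition annihilates :: "cvec3 \<Rightarrow> ('m \<Rightarrow> cvec3) \<Rightarrow> 'm set \<Rightarrow> bool" where
  "annihilates n g S \<longleftrightarrow> (\<forall>m\<in>S. dot3 n (g m) = 0)"

definition annihilated :: "('m \<Rightarrow> cvec3) \<Rightarrow> 'm set \<Rightarrow> bool" where
  "annihilated g S \<longleftrightarrow> (\<exists>n. nonzero3 n \<and> annihilates n g S)"

definition pencil_annihilated :: "('m \<Rightarrow> cvec3) \<Rightarrow> 'm set \<Rightarrow> bool" where
  "pencil_annihilated g S \<longleftrightarrow>
     (\<exists>n n'. nonzero3 (cross3 n n') \<and> annihilates n g S \<and> annihilates n' g S)"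

definition pencil_annihilated_with :: "('m \<Rightarrow> cvec3) \<Rightarrow> 'm set \<Rightarrow> 'm set \<Rightarrow> bool" where
  "pencil_annihilated_with g S T \<longleftrightarrow>
     (\<exists>n n'. nonzero3 (cross3 n n') \<and> annihilates n g S \<and> annihilates n' g S \<and>
        (\<exists>a b. nonzero3 (lincomb3 a n b n') \<and> annihilates (lincomb3 a n b n') g T))"

definition vanishes_on :: "('m \<Rightarrow> cvec3) \<Rightarrow> 'm set \<Rightarrow> bool" where
  "vanishes_on g S \<longleftrightarrow> (\<forall>m\<in>S. \<not> nonzero3 (g m))"

definition spanning :: "('m \<Rightarrow> cvec3) \<Rightarrow> 'm set \<Rightarrow> bool" where
  "spanning g U \<longleftrightarrow> (\<forall>n. nonzero3 n \<longrightarrow> \<not> annihilates n g U)"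

definition weight_unstable :: "('m \<Rightarrow> cvec3) \<Rightarrow> 'm set \<Rightarrow> ('m \<Rightarrow> int) \<Rightarrow> bool" where
  "weight_unstable g U w \<longleftrightarrow>
     (\<forall>x\<in>U. \<forall>y\<in>U. \<forall>z\<in>U. 0 < w x + w y + w z \<longrightarrow> triple (g x) (g y) (g z) = 0)"

lemma annihilates_lincomb3:
  "annihilates n g S \<Longrightarrow> annihilates n' g S \<Longrightarrow> annihilates (lincomb3 a n b n') g S"
  by (simp add: annihilates_def dot3_lincomb3)

lemma annihilates_cross3:
  "annihilates (cross3 u v) g S \<longleftrightarrow> (\<forall>z\<in>S. triple u v (g z) = 0)"
  by (simp add: annihilates_def triple_rotate dot3_commute)

lemma ex_annihilator_through:
  assumes u: "nonzero3 u" and H: "\<forall>y\<in>T. \<forall>z\<in>T. triple u (g y) (g z) = 0"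
  obtains n where "nonzero3 n" "dot3 n u = 0" "annihilates n g T"
proof (cases "\<exists>y\<in>T. nonzero3 (cross3 u (g y))")
  case True
  then obtain y where "y \<in> T" "nonzero3 (cross3 u (g y))" by blast
  moreover have "annihilates (cross3 u (g y)) g T"
    using H \<open>y \<in> T\<close> by (simp add: annihilates_cross3)
  ultimately show ?thesis using that by (simp add: dot3_commute)
next
  case False
  obtain i where i: "nonzero3 (cross3 u (unit3 i))" using ex_nonzero_cross3_unit3[OF u] by blast
  have "dot3 (cross3 u (unit3 i)) u = 0" by (simp add: dot3_commute)
  then have "annihilates (cross3 u (unit3 i)) g T"
    unfolding annihilates_def using dot3_eq_0_if_parallel[OF u] False by blast
  then show ?thesis using that i \<open>dot3 (cross3 u (unit3 i)) u = 0\<close> by blast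
qed

lemma annihilated_iff_triple_eq_0:
  "annihilated g S \<longleftrightarrow> (\<forall>x\<in>S. \<forall>y\<in>S. \<forall>z\<in>S. triple (g x) (g y) (g z) = 0)"
proof
  assume "annihilated g S"
  then show "\<forall>x\<in>S. \<forall>y\<in>S. \<forall>z\<in>S. triple (g x) (g y) (g z) = 0"
    unfolding annihilated_def annihilates_def using triple_eq_0_if_common_annihilator by blast
next
  assume H: "\<forall>x\<in>S. \<forall>y\<in>S. \<forall>z\<in>S. triple (g x) (g y) (g z) = 0"
  show "annihilated g S"
  proof (cases "\<exists>x\<in>S. nonzero3 (g x)")
    case True
    then obtain x where "x \<in> S" "nonzero3 (g x)" by blast
    then show ?thesis
      using H ex_annihilator_through[of "g x" S g] unfolding annihilated_def by metis
  next
    case False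
    then have "annihilates (unit3 0) g S"
      by (auto simp: annihilates_def dot3_def unit3_def nonzero3_def)
    moreover have "nonzero3 (unit3 0)" by (simp add: nonzero3_def unit3_def)
    ultimately show ?thesis unfolding annihilated_def by blast
  qed
qed

lemma pencil_annihilated_iff_parallel:
  "pencil_annihilated g S \<longleftrightarrow> (\<forall>x\<in>S. \<forall>y\<in>S. \<not> nonzero3 (cross3 (g x) (g y)))"
proof
  assume "pencil_annihilated g S"
  then obtain n n' where nn: "nonzero3 (cross3 n n')" "annihilates n g S" "annihilates n' g S"
    unfolding pencil_annihilated_def by blast
  have "\<not> nonzero3 (cross3 (cross3 n n') (g x))" if "x \<in> S" for x
    using nn(2,3) that cross3_cross3_left
    by (force simp: annihilates_def nonzero3_iff_component)
  then show "\<forall>x\<in>S. \<forall>y\<in>S. \<not> nonzero3 (cross3 (g x) (g y))"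
    using parallel3_trans[OF nn(1)] by blast
next
  assume H: "\<forall>x\<in>S. \<forall>y\<in>S. \<not> nonzero3 (cross3 (g x) (g y))"
  show "pencil_annihilated g S"
  proof (cases "\<exists>x\<in>S. nonzero3 (g x)")
    case True
    then obtain x where x: "x \<in> S" "nonzero3 (g x)" by blast
    then obtain i where i: "nonzero3 (cross3 (g x) (unit3 i))"
      using ex_nonzero_cross3_unit3 by blast
    have d: "dot3 (cross3 (g x) (unit3 i)) (g x) = 0" by (simp add: dot3_commute)
    obtain n' where n': "dot3 n' (g x) = 0" "nonzero3 (cross3 (cross3 (g x) (unit3 i)) n')"
      using ex_independent_annihilator[OF x(2) i d] by blast
    have "annihilates (cross3 (g x) (unit3 i)) g S" "annihilates n' g S"
      unfolding annihilates_def using dot3_eq_0_if_parallel[OF x(2)] H x(1) d n'(1) by blast+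
    with n' show ?thesis unfolding pencil_annihilated_def by blast
  next
    case False
    then have "annihilates (unit3 0) g S" "annihilates (unit3 1) g S"
      by (auto simp: annihilates_def dot3_def unit3_def nonzero3_def)
    moreover have "nonzero3 (cross3 (unit3 0) (unit3 1))"
      by (simp add: nonzero3_def unit3_def cross3_def)
    ultimately show ?thesis unfolding pencil_annihilated_def by blast
  qed
qed

lemma all_annihilates_iff_vanishes_on: "(\<forall>n. annihilates n g S) \<longleftrightarrow> vanishes_on g S"
proof
  assume H: "\<forall>n. annihilates n g S"
  have "dot3 (unit3 k) (g m) = g m k" if "k \<le> 2" for k m
    using that by (auto simp: le_2_iff dot3_def unit3_def)
  then show "vanishes_on g S"
    using H unfolding annihilates_def vanishes_on_def nonzero3_iff_component by metis
next
  assume "vanishes_on g S"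
  then show "\<forall>n. annihilates n g S"
    by (auto simp: annihilates_def vanishes_on_def nonzero3_def dot3_def)
qed

lemma triple_eq_0_if_vanishes_on:
  "vanishes_on g S \<Longrightarrow> x \<in> S \<or> y \<in> S \<or> z \<in> S \<Longrightarrow> triple (g x) (g y) (g z) = 0"
  unfolding vanishes_on_def using triple_eq_0_if_zero by blast

lemma triple_eq_0_if_pencil_annihilated:
  assumes "pencil_annihilated g S" "x \<in> S \<and> y \<in> S \<or> x \<in> S \<and> z \<in> S \<or> y \<in> S \<and> z \<in> S"
  shows "triple (g x) (g y) (g z) = 0"
  using assms triple_eq_0_if_parallel unfolding pencil_annihilated_iff_parallel by blast

lemma triple_eq_0_if_annihilated:
  "annihilated g S \<Longrightarrow> x \<in> S \<Longrightarrow> y \<in> S \<Longrightarrow> z \<in> S \<Longrightarrow> triple (g x) (g y) (g z) = 0"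
  unfolding annihilated_iff_triple_eq_0 by blast

lemma parallel_if_spanning:
  "spanning g U \<Longrightarrow> \<forall>z\<in>U. triple u v (g z) = 0 \<Longrightarrow> \<not> nonzero3 (cross3 u v)"
  unfolding spanning_def annihilates_cross3[symmetric] by blast

lemma zero_if_spanning:
  assumes "spanning g U" "\<forall>y\<in>U. \<forall>z\<in>U. triple u (g y) (g z) = 0"
  shows "\<not> nonzero3 u"
  using assms ex_annihilator_through[of u U g] unfolding spanning_def by metis

lemma pencil_annihilated_with_through:
  assumes u: "nonzero3 u" and S: "\<forall>m\<in>S. \<not> nonzero3 (cross3 u (g m))"
    and T: "\<forall>y\<in>T. \<forall>z\<in>T. triple u (g y) (g z) = 0"
  shows "pencil_annihilated_with g S T"
proof -
  obtain n where n: "nonzero3 n" "dot3 n u = 0" "annihilates n g T"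
    using ex_annihilator_through[OF u T] by blast
  obtain n' where n': "dot3 n' u = 0" "nonzero3 (cross3 n n')"
    using ex_independent_annihilator[OF u n(1,2)] by blast
  have "annihilates v g S" if "dot3 v u = 0" for v
    unfolding annihilates_def using S dot3_eq_0_if_parallel[OF u _ that] by blast
  then have "annihilates n g S" "annihilates n' g S" using n(2) n'(1) by blast+
  moreover have "lincomb3 1 n 0 n' = n" by (simp add: lincomb3_def)
  ultimately show ?thesis
    unfolding pencil_annihilated_with_def using n(1,3) n'(2)
    by (intro exI[of _ n] exI[of _ n'] conjI exI[of _ 1] exI[of _ 0]) simp_all
qed

lemma pencil_annihilated_withD:
  "pencil_annihilated_with g S T \<Longrightarrow> pencil_annihilated g S \<and> annihilated g T"
  unfolding pencil_annihilated_with_def pencil_annihilated_def annihilated_def by blast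

section \<open>Instability for the five weight patterns\<close>

text \<open>On the monomials \<open>x\<^sub>px\<^sub>q\<close> the weights of \<open>\<rho>\<^sub>i\<close> take three values, according to
  whether both, one or none of \<open>p, q\<close> lie in the first block of coordinates.\<close>

lemma weight_unstableD:
  "weight_unstable g U w \<Longrightarrow> x \<in> U \<Longrightarrow> y \<in> U \<Longrightarrow> z \<in> U \<Longrightarrow> 0 < w x + w y + w z
    \<Longrightarrow> triple (g x) (g y) (g z) = 0"
  unfolding weight_unstable_def by blast

lemma parallel_if_weight_unstable:
  assumes "spanning g U" "weight_unstable g U w" "a \<in> U" "b \<in> U" "\<forall>z\<in>U. 0 < w a + w b + w z"
  shows "\<not> nonzero3 (cross3 (g a) (g b))"
  using assms weight_unstableD[OF assms(2,3,4)] by (intro parallel_if_spanning) auto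

lemma zero_if_weight_unstable:
  assumes "spanning g U" "weight_unstable g U w" "a \<in> U" "\<forall>y\<in>U. \<forall>z\<in>U. 0 < w a + w y + w z"
  shows "\<not> nonzero3 (g a)"
  using assms weight_unstableD[OF assms(2,3)] by (intro zero_if_spanning) auto

lemma weight_unstable_rho1_iff:
  assumes W: "\<forall>m\<in>U. w m = 2 \<or> w m = -4 \<or> w m = -10"
  shows "weight_unstable g U w \<longleftrightarrow> annihilated g {m\<in>U. w m = 2}"
proof -
  have "0 < w x + w y + w z \<longleftrightarrow> w x = 2 \<and> w y = 2 \<and> w z = 2"
    if "x \<in> U" "y \<in> U" "z \<in> U" for x y z
  proof -
    have "w x \<in> {2, -4, -10}" "w y \<in> {2, -4, -10}" "w z \<in> {2, -4, -10}" using W that by auto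
    then show ?thesis by auto
  qed
  then show ?thesis
    unfolding weight_unstable_def annihilated_iff_triple_eq_0 by auto
qed

lemma weight_unstable_rho2_iff:
  assumes W: "\<forall>m\<in>U. w m = 2 \<or> w m = -1 \<or> w m = -4"
  shows "weight_unstable g U w \<longleftrightarrow>
    pencil_annihilated g {m\<in>U. w m = 2} \<or> annihilated g {m\<in>U. -1 \<le> w m}"
proof
  assume H: "weight_unstable g U w"
  show "pencil_annihilated g {m\<in>U. w m = 2} \<or> annihilated g {m\<in>U. -1 \<le> w m}"
  proof (cases "\<exists>a\<in>{m\<in>U. w m = 2}. \<exists>b\<in>{m\<in>U. w m = 2}. nonzero3 (cross3 (g a) (g b))")
    case True
    then obtain a b where ab: "a \<in> U" "b \<in> U" "w a = 2" "w b = 2" "nonzero3 (cross3 (g a) (g b))"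
      by blast
    have "annihilates (cross3 (g a) (g b)) g {m\<in>U. -1 \<le> w m}"
      using weight_unstableD[OF H] ab unfolding annihilates_cross3 by auto
    with ab show ?thesis unfolding annihilated_def by blast
  next
    case False
    then show ?thesis unfolding pencil_annihilated_iff_parallel by blast
  qed
next
  assume H: "pencil_annihilated g {m\<in>U. w m = 2} \<or> annihilated g {m\<in>U. -1 \<le> w m}"
  show "weight_unstable g U w" unfolding weight_unstable_def
  proof (intro ballI impI)
    fix x y z assume xyz: "x \<in> U" "y \<in> U" "z \<in> U" "0 < w x + w y + w z"
    moreover have "w x \<in> {2, -1, -4}" "w y \<in> {2, -1, -4}" "w z \<in> {2, -1, -4}"
      using W xyz by auto
    ultimately have "w x = 2 \<and> w y = 2 \<or> w x = 2 \<and> w z = 2 \<or> w y = 2 \<and> w z = 2"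
      "-1 \<le> w x" "-1 \<le> w y" "-1 \<le> w z"
      by auto
    then show "triple (g x) (g y) (g z) = 0"
      using H xyz triple_eq_0_if_pencil_annihilated[of g "{m\<in>U. w m = 2}" x y z]
        triple_eq_0_if_annihilated[of g "{m\<in>U. -1 \<le> w m}" x y z] by blast
  qed
qed

lemma weight_unstable_rho3_iff:
  assumes W: "\<forall>m\<in>U. w m = 2 \<or> w m = 0 \<or> w m = -2" and U: "spanning g U"
  shows "weight_unstable g U w \<longleftrightarrow>
    vanishes_on g {m\<in>U. w m = 2} \<or> pencil_annihilated_with g {m\<in>U. w m = 2} {m\<in>U. 0 \<le> w m}"
proof
  assume H: "weight_unstable g U w"
  show "vanishes_on g {m\<in>U. w m = 2} \<or> pencil_annihilated_with g {m\<in>U. w m = 2} {m\<in>U. 0 \<le> w m}"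
  proof (cases "vanishes_on g {m\<in>U. w m = 2}")
    case False
    then obtain a where a: "a \<in> U" "w a = 2" "nonzero3 (g a)" unfolding vanishes_on_def by blast
    have "\<forall>m\<in>{m\<in>U. w m = 2}. \<not> nonzero3 (cross3 (g a) (g m))"
      using W a by (intro ballI parallel_if_weight_unstable[OF U H]) auto
    moreover have "\<forall>y\<in>{m\<in>U. 0 \<le> w m}. \<forall>z\<in>{m\<in>U. 0 \<le> w m}. triple (g a) (g y) (g z) = 0"
      using weight_unstableD[OF H] a by auto
    ultimately show ?thesis using pencil_annihilated_with_through[OF a(3)] by blast
  qed simp
next
  assume H: "vanishes_on g {m\<in>U. w m = 2} \<or>
    pencil_annihilated_with g {m\<in>U. w m = 2} {m\<in>U. 0 \<le> w m}"
  then have H': "vanishes_on g {m\<in>U. w m = 2} \<or>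
    pencil_annihilated g {m\<in>U. w m = 2} \<and> annihilated g {m\<in>U. 0 \<le> w m}"
    using pencil_annihilated_withD by blast
  show "weight_unstable g U w" unfolding weight_unstable_def
  proof (intro ballI impI)
    fix x y z assume xyz: "x \<in> U" "y \<in> U" "z \<in> U" "0 < w x + w y + w z"
    moreover have "w x \<in> {2, 0, -2}" "w y \<in> {2, 0, -2}" "w z \<in> {2, 0, -2}"
      using W xyz by auto
    ultimately have "w x = 2 \<or> w y = 2 \<or> w z = 2"
      "w x = 2 \<and> w y = 2 \<or> w x = 2 \<and> w z = 2 \<or> w y = 2 \<and> w z = 2
        \<or> 0 \<le> w x \<and> 0 \<le> w y \<and> 0 \<le> w z"
      by auto
    then show "triple (g x) (g y) (g z) = 0"
      using H' xyz triple_eq_0_if_vanishes_on[of g "{m\<in>U. w m = 2}" x y z]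
        triple_eq_0_if_pencil_annihilated[of g "{m\<in>U. w m = 2}" x y z]
        triple_eq_0_if_annihilated[of g "{m\<in>U. 0 \<le> w m}" x y z] by blast
  qed
qed

lemma weight_unstable_rho4_iff:
  assumes W: "\<forall>m\<in>U. w m = 4 \<or> w m = 1 \<or> w m = -2" and U: "spanning g U"
  shows "weight_unstable g U w \<longleftrightarrow>
    (vanishes_on g {m\<in>U. w m = 4} \<and> annihilated g {m\<in>U. 1 \<le> w m})
    \<or> pencil_annihilated g {m\<in>U. 1 \<le> w m}"
proof
  assume H: "weight_unstable g U w"
  show "(vanishes_on g {m\<in>U. w m = 4} \<and> annihilated g {m\<in>U. 1 \<le> w m})
    \<or> pencil_annihilated g {m\<in>U. 1 \<le> w m}"
  proof (cases "vanishes_on g {m\<in>U. w m = 4}")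
    case True
    have "annihilated g {m\<in>U. 1 \<le> w m}"
      using weight_unstableD[OF H] unfolding annihilated_iff_triple_eq_0 by auto
    with True show ?thesis by blast
  next
    case False
    then obtain a where a: "a \<in> U" "w a = 4" "nonzero3 (g a)" unfolding vanishes_on_def by blast
    have "\<forall>b\<in>{m\<in>U. 1 \<le> w m}. \<not> nonzero3 (cross3 (g a) (g b))"
      using W a by (intro ballI parallel_if_weight_unstable[OF U H]) auto
    then have "pencil_annihilated g {m\<in>U. 1 \<le> w m}"
      unfolding pencil_annihilated_iff_parallel using parallel3_trans[OF a(3)] by blast
    then show ?thesis ..
  qed
next
  assume H: "(vanishes_on g {m\<in>U. w m = 4} \<and> annihilated g {m\<in>U. 1 \<le> w m})
    \<or> pencil_annihilated g {m\<in>U. 1 \<le> w m}"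
  show "weight_unstable g U w" unfolding weight_unstable_def
  proof (intro ballI impI)
    fix x y z assume xyz: "x \<in> U" "y \<in> U" "z \<in> U" "0 < w x + w y + w z"
    moreover have "w x \<in> {4, 1, -2}" "w y \<in> {4, 1, -2}" "w z \<in> {4, 1, -2}"
      using W xyz by auto
    ultimately have "w x = 4 \<or> w y = 4 \<or> w z = 4 \<or> 1 \<le> w x \<and> 1 \<le> w y \<and> 1 \<le> w z"
      "1 \<le> w x \<and> 1 \<le> w y \<or> 1 \<le> w x \<and> 1 \<le> w z \<or> 1 \<le> w y \<and> 1 \<le> w z"
      by auto
    then show "triple (g x) (g y) (g z) = 0"
      using H xyz triple_eq_0_if_vanishes_on[of g "{m\<in>U. w m = 4}" x y z]
        triple_eq_0_if_annihilated[of g "{m\<in>U. 1 \<le> w m}" x y z]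
        triple_eq_0_if_pencil_annihilated[of g "{m\<in>U. 1 \<le> w m}" x y z] by blast
  qed
qed

lemma weight_unstable_rho5_iff:
  assumes W: "\<forall>m\<in>U. w m = 10 \<or> w m = 4 \<or> w m = -2" and U: "spanning g U"
  shows "weight_unstable g U w \<longleftrightarrow>
    vanishes_on g {m\<in>U. w m = 10} \<and> pencil_annihilated g {m\<in>U. 4 \<le> w m}"
proof
  assume H: "weight_unstable g U w"
  have "\<not> nonzero3 (g a)" if "a \<in> U" "w a = 10" for a
  proof (intro zero_if_weight_unstable[OF U H that(1)] ballI)
    fix y z assume "y \<in> U" "z \<in> U"
    then show "0 < w a + w y + w z"
      using W[rule_format, OF \<open>y \<in> U\<close>] W[rule_format, OF \<open>z \<in> U\<close>] that(2) by auto
  qed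
  moreover have "\<not> nonzero3 (cross3 (g a) (g b))"
    if "a \<in> U" "b \<in> U" "4 \<le> w a" "4 \<le> w b" for a b
    using W that by (intro parallel_if_weight_unstable[OF U H]) auto
  ultimately show "vanishes_on g {m\<in>U. w m = 10} \<and> pencil_annihilated g {m\<in>U. 4 \<le> w m}"
    unfolding vanishes_on_def pencil_annihilated_iff_parallel by auto
next
  assume H: "vanishes_on g {m\<in>U. w m = 10} \<and> pencil_annihilated g {m\<in>U. 4 \<le> w m}"
  show "weight_unstable g U w" unfolding weight_unstable_def
  proof (intro ballI impI)
    fix x y z assume xyz: "x \<in> U" "y \<in> U" "z \<in> U" "0 < w x + w y + w z"
    moreover have "w x \<in> {10, 4, -2}" "w y \<in> {10, 4, -2}" "w z \<in> {10, 4, -2}"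
      using W xyz by auto
    ultimately have "w x = 10 \<or> w y = 10 \<or> w z = 10
      \<or> 4 \<le> w x \<and> 4 \<le> w y \<or> 4 \<le> w x \<and> 4 \<le> w z \<or> 4 \<le> w y \<and> 4 \<le> w z"
      by auto
    then show "triple (g x) (g y) (g z) = 0"
      using H xyz triple_eq_0_if_vanishes_on[of g "{m\<in>U. w m = 10}" x y z]
        triple_eq_0_if_pencil_annihilated[of g "{m\<in>U. 4 \<le> w m}" x y z] by blast
  qed
qed

section \<open>Quadratic forms in a basis\<close>

definition base_change :: "complex mat \<Rightarrow> complex mat \<Rightarrow> complex mat" where
  "base_change M A = transpose_mat M * A * M"

lemma base_change_carrier [simp]:
  "M \<in> carrier_mat n n \<Longrightarrow> A \<in> carrier_mat n n \<Longrightarrow> base_change M A \<in> carrier_mat n n"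
  unfolding base_change_def by auto

lemma base_change_sym:
  assumes "sym6 A" "M \<in> carrier_mat 6 6" "i < 6" "j < 6"
  shows "base_change M A $$ (i, j) = base_change M A $$ (j, i)"
proof -
  have A: "A \<in> carrier_mat 6 6" "transpose_mat A = A" using assms(1) by (auto simp: sym6_def)
  then have "transpose_mat (base_change M A) = base_change M A"
    unfolding base_change_def using assms(2) by (simp add: transpose_mult[of _ 6 6 _ 6])
  moreover have "base_change M A \<in> carrier_mat 6 6" using assms(2) A(1) by simp
  ultimately show ?thesis using assms(3,4) by (metis carrier_matD index_transpose_mat(1))
qed

lemma qcoeff_eq_0_iff: "qcoeff M A (p, q) = 0 \<longleftrightarrow> base_change M A $$ (p, q) = 0"
  by (simp add: qcoeff_def base_change_def)

lemma base_change_mult_mat_vec: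
  assumes "M \<in> carrier_mat n n" "A \<in> carrier_mat n n" "x \<in> carrier_vec n"
  shows "base_change M A *\<^sub>v x = transpose_mat M *\<^sub>v (A *\<^sub>v (M *\<^sub>v x))"
proof -
  have "base_change M A *\<^sub>v x = (transpose_mat M * (A * M)) *\<^sub>v x"
    using assms by (simp add: base_change_def assoc_mult_mat[of _ n n _ n _ n])
  also have "\<dots> = transpose_mat M *\<^sub>v ((A * M) *\<^sub>v x)"
    using assms by (intro assoc_mult_mat_vec[of _ n n _ n]) auto
  finally show ?thesis using assms by simp
qed

lemma quad_mult_mat_vec:
  assumes "M \<in> carrier_mat n n" "A \<in> carrier_mat n n" "x \<in> carrier_vec n"
  shows "quad A (M *\<^sub>v x) = x \<bullet> (base_change M A *\<^sub>v x)"
proof -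
  have "quad A (M *\<^sub>v x) = (A *\<^sub>v (M *\<^sub>v x)) \<bullet> (M *\<^sub>v x)"
    unfolding quad_def using assms by (intro comm_scalar_prod[of _ n]) auto
  also have "\<dots> = (transpose_mat M *\<^sub>v (A *\<^sub>v (M *\<^sub>v x))) \<bullet> x"
    using transpose_vec_mult_scalar[of M n n x "A *\<^sub>v (M *\<^sub>v x)"] assms by simp
  also have "\<dots> = x \<bullet> (base_change M A *\<^sub>v x)"
    using assms by (simp add: base_change_mult_mat_vec comm_scalar_prod[of _ n])
  finally show ?thesis .
qed

lemma mult_mat_vec_eq_0_if_support:
  assumes "(B :: complex mat) \<in> carrier_mat n n" "x \<in> carrier_vec n"
    and "\<forall>i<n. \<forall>k<n. x $ k \<noteq> 0 \<longrightarrow> B $$ (i, k) = 0"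
  shows "B *\<^sub>v x = 0\<^sub>v n"
proof (rule eq_vecI)
  fix i assume "i < dim_vec (0\<^sub>v n :: complex vec)"
  then have "i < n" by simp
  then have "(B *\<^sub>v x) $ i = (\<Sum>k<n. B $$ (i, k) * x $ k)"
    using assms(1,2) by (simp add: scalar_prod_def row_def atLeast0LessThan)
  also have "\<dots> = 0"
    using assms(3) \<open>i < n\<close> by (intro sum.neutral) auto
  finally show "(B *\<^sub>v x) $ i = 0\<^sub>v n $ i" using \<open>i < n\<close> by simp
qed (use assms in simp)

lemma scalar_prod_mult_mat_vec_eq_0_if_support:
  assumes "(B :: complex mat) \<in> carrier_mat n n" "x \<in> carrier_vec n"
    and "\<forall>i<n. \<forall>k<n. x $ i \<noteq> 0 \<longrightarrow> x $ k \<noteq> 0 \<longrightarrow> B $$ (i, k) = 0"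
  shows "x \<bullet> (B *\<^sub>v x) = 0"
proof -
  have "x \<bullet> (B *\<^sub>v x) = (\<Sum>i<n. x $ i * (\<Sum>k<n. B $$ (i, k) * x $ k))"
    using assms(1,2) by (simp add: scalar_prod_def row_def atLeast0LessThan)
  also have "\<dots> = 0"
  proof (intro sum.neutral ballI)
    fix i assume "i \<in> {..<n}"
    then have "x $ i = 0 \<or> (\<forall>k\<in>{..<n}. B $$ (i, k) * x $ k = 0)" using assms(3) by auto
    then show "x $ i * (\<Sum>k<n. B $$ (i, k) * x $ k) = 0"
      by (auto simp: sum.neutral)
  qed
  finally show ?thesis .
qed

lemma invertible_mat_obtain_inverse:
  assumes "M \<in> carrier_mat n n" "invertible_mat M"
  obtains N where "N \<in> carrier_mat n n" "M * N = 1\<^sub>m n" "N * M = 1\<^sub>m n"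
proof -
  obtain N where N: "inverts_mat M N" "inverts_mat N M"
    using assms(2) unfolding invertible_mat_def by blast
  have MN: "M * N = 1\<^sub>m n" using N(1) assms(1) unfolding inverts_mat_def carrier_mat_def by auto
  have NM: "N * M = 1\<^sub>m (dim_row N)" using N(2) unfolding inverts_mat_def by (simp only:)
  have "dim_col N = n"
    using arg_cong[OF MN, of dim_col] by (simp only: index_mult_mat index_one_mat)
  moreover have "dim_col M = dim_row N"
    using arg_cong[OF NM, of dim_col] by (simp only: index_mult_mat index_one_mat)
  ultimately have "dim_row N = n" "dim_col N = n" using carrier_matD(2)[OF assms(1)] by simp_all
  then show ?thesis using MN NM by (intro that carrier_matI) simp_all
qed

lemma mult_mat_vec_zero_vec: "(A :: 'a :: semiring_0 mat) \<in> carrier_mat n m \<Longrightarrow> A *\<^sub>v 0\<^sub>v m = 0\<^sub>v n"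
  by (intro eq_vecI) (auto simp: scalar_prod_def)

lemma transpose_invertible_mult_mat_vec_eq_0:
  assumes "(M :: complex mat) \<in> carrier_mat n n" "invertible_mat M" "y \<in> carrier_vec n"
    and "transpose_mat M *\<^sub>v y = 0\<^sub>v n"
  shows "y = 0\<^sub>v n"
proof -
  obtain N where N: "N \<in> carrier_mat n n" "M * N = 1\<^sub>m n"
    using invertible_mat_obtain_inverse[OF assms(1,2)] by blast
  have "transpose_mat N * transpose_mat M = 1\<^sub>m n"
    using N assms(1) transpose_mult[of M n n N n] by simp
  then have "y = (transpose_mat N * transpose_mat M) *\<^sub>v y" using assms(3) by simp
  also have "\<dots> = transpose_mat N *\<^sub>v (transpose_mat M *\<^sub>v y)"
    using assms(1,3) N(1) by (intro assoc_mult_mat_vec[of _ n n _ n]) auto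
  finally show ?thesis using assms(4) N(1) by (simp add: mult_mat_vec_zero_vec)
qed

lemma contains_flagsp_iff_base_change:
  assumes "M \<in> carrier_mat 6 6" "A \<in> carrier_mat 6 6"
  shows "contains A (flagsp M j) \<longleftrightarrow> (\<forall>x\<in>carrier_vec 6.
    (\<forall>k. j < k \<and> k < 6 \<longrightarrow> x $ k = 0) \<longrightarrow> x \<bullet> (base_change M A *\<^sub>v x) = 0)"
  using quad_mult_mat_vec[OF assms] unfolding contains_def flagsp_def by auto

lemma sing_along_flagsp_iff_base_change:
  assumes M: "M \<in> carrier_mat 6 6" and A: "A \<in> carrier_mat 6 6" and I: "invertible_mat M"
  shows "sing_along A (flagsp M j) \<longleftrightarrow> (\<forall>x\<in>carrier_vec 6.
    (\<forall>k. j < k \<and> k < 6 \<longrightarrow> x $ k = 0) \<longrightarrow> base_change M A *\<^sub>v x = 0\<^sub>v 6)"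
proof -
  have "A *\<^sub>v (M *\<^sub>v x) = 0\<^sub>v 6 \<longleftrightarrow> base_change M A *\<^sub>v x = 0\<^sub>v 6" if "x \<in> carrier_vec 6" for x
    using transpose_invertible_mult_mat_vec_eq_0[OF M I, of "A *\<^sub>v (M *\<^sub>v x)"] A M that
    by (auto simp: base_change_mult_mat_vec[OF M A that])
  then show ?thesis unfolding sing_along_def flagsp_def by auto
qed

lemma contains_flagsp_iff_entries:
  assumes S: "sym6 A" and M: "M \<in> carrier_mat 6 6"
  shows "contains A (flagsp M j) \<longleftrightarrow>
    (\<forall>p<6. \<forall>q<6. max p q \<le> j \<longrightarrow> base_change M A $$ (p, q) = 0)"
    (is "_ \<longleftrightarrow> (\<forall>p<6. \<forall>q<6. _ \<longrightarrow> ?B $$ (p, q) = 0)")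
proof -
  have A: "A \<in> carrier_mat 6 6" using S by (simp add: sym6_def)
  then have B: "?B \<in> carrier_mat 6 6" using M by simp
  show ?thesis unfolding contains_flagsp_iff_base_change[OF M A]
  proof (intro iffI allI impI ballI)
    fix p q assume H: "\<forall>x\<in>carrier_vec 6. (\<forall>k. j < k \<and> k < 6 \<longrightarrow> x $ k = 0) \<longrightarrow> x \<bullet> (?B *\<^sub>v x) = 0"
      and pq: "p < 6" "q < 6" "max p q \<le> j"
    let ?e = "\<lambda>k. unit_vec 6 k :: complex vec"
    have diag: "?B $$ (k, k) = 0" if "k \<le> j" "k < 6" for k
      using H[rule_format, of "?e k"] that B by auto
    have "(?e p + ?e q) \<bullet> (?B *\<^sub>v (?e p + ?e q)) = 0"
      using H[rule_format, of "?e p + ?e q"] pq by auto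
    moreover have "(?e p + ?e q) \<bullet> (?B *\<^sub>v (?e p + ?e q))
        = ?B $$ (p, p) + ?B $$ (p, q) + ?B $$ (q, p) + ?B $$ (q, q)"
      using B pq by (simp add: mult_add_distrib_mat_vec add_scalar_prod_distrib[of _ 6]
          scalar_prod_add_distrib[of _ 6])
    ultimately show "?B $$ (p, q) = 0"
      using diag[of p] diag[of q] pq base_change_sym[OF S M, of p q] by simp
  next
    fix x :: "complex vec" assume H: "\<forall>p<6. \<forall>q<6. max p q \<le> j \<longrightarrow> ?B $$ (p, q) = 0"
      and x: "x \<in> carrier_vec 6" "\<forall>k. j < k \<and> k < 6 \<longrightarrow> x $ k = 0"
    show "x \<bullet> (?B *\<^sub>v x) = 0"
      using H x
      by (intro scalar_prod_mult_mat_vec_eq_0_if_support[OF B x(1)]) (metis max.bounded_iff not_le)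
  qed
qed

lemma sing_along_flagsp_iff_entries:
  assumes S: "sym6 A" and M: "M \<in> carrier_mat 6 6" and I: "invertible_mat M"
  shows "sing_along A (flagsp M j) \<longleftrightarrow>
    (\<forall>p<6. \<forall>q<6. min p q \<le> j \<longrightarrow> base_change M A $$ (p, q) = 0)"
    (is "_ \<longleftrightarrow> (\<forall>p<6. \<forall>q<6. _ \<longrightarrow> ?B $$ (p, q) = 0)")
proof -
  have A: "A \<in> carrier_mat 6 6" using S by (simp add: sym6_def)
  then have B: "?B \<in> carrier_mat 6 6" using M by simp
  show ?thesis unfolding sing_along_flagsp_iff_base_change[OF M A I]
  proof (intro iffI allI impI ballI)
    fix p q assume H: "\<forall>x\<in>carrier_vec 6. (\<forall>k. j < k \<and> k < 6 \<longrightarrow> x $ k = 0) \<longrightarrow> ?B *\<^sub>v x = 0\<^sub>v 6"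
      and pq: "p < 6" "q < 6" "min p q \<le> j"
    have col: "?B $$ (i, k) = 0" if "k \<le> j" "k < 6" "i < 6" for i k
    proof -
      have "(?B *\<^sub>v unit_vec 6 k) $ i = 0" using H that by auto
      then show ?thesis using B that by simp
    qed
    show "?B $$ (p, q) = 0"
      using pq col[of q p] col[of p q] base_change_sym[OF S M, of p q] by (cases "p \<le> q") auto
  next
    fix x :: "complex vec" assume H: "\<forall>p<6. \<forall>q<6. min p q \<le> j \<longrightarrow> ?B $$ (p, q) = 0"
      and x: "x \<in> carrier_vec 6" "\<forall>k. j < k \<and> k < 6 \<longrightarrow> x $ k = 0"
    show "?B *\<^sub>v x = 0\<^sub>v 6"
    proof (rule mult_mat_vec_eq_0_if_support[OF B x(1)], intro allI impI)
      fix i k :: nat assume "i < 6" "k < 6" "x $ k \<noteq> 0"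
      then have "k \<le> j" using x(2) by (meson not_le)
      then show "?B $$ (i, k) = 0" using H \<open>i < 6\<close> \<open>k < 6\<close> by (simp add: min_le_iff_disj)
    qed
  qed
qed

lemma qcoeff_monomials_eq_0_iff:
  assumes "sym6 A" "M \<in> carrier_mat 6 6"
  shows "(\<forall>m\<in>monomials. R m \<longrightarrow> qcoeff M A m = 0) \<longleftrightarrow>
    (\<forall>p<6. \<forall>q<6. R (min p q, max p q) \<longrightarrow> base_change M A $$ (p, q) = 0)"
proof
  assume H: "\<forall>m\<in>monomials. R m \<longrightarrow> qcoeff M A m = 0"
  show "\<forall>p<6. \<forall>q<6. R (min p q, max p q) \<longrightarrow> base_change M A $$ (p, q) = 0"
  proof (intro allI impI)
    fix p q :: nat assume pq: "p < 6" "q < 6" "R (min p q, max p q)"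
    then have "(min p q, max p q) \<in> monomials" by (simp add: monomials_def)
    then have "qcoeff M A (min p q, max p q) = 0" using H pq(3) by blast
    then have "base_change M A $$ (min p q, max p q) = 0" by (simp only: qcoeff_eq_0_iff)
    then show "base_change M A $$ (p, q) = 0"
      using base_change_sym[OF assms pq(1,2)] by (cases "p \<le> q") (simp_all add: min_def max_def)
  qed
next
  assume H: "\<forall>p<6. \<forall>q<6. R (min p q, max p q) \<longrightarrow> base_change M A $$ (p, q) = 0"
  show "\<forall>m\<in>monomials. R m \<longrightarrow> qcoeff M A m = 0"
  proof (intro ballI impI)
    fix m assume "m \<in> monomials" "R m"
    then obtain p q where "m = (p, q)" "p \<le> q" "q < 6" "R (min p q, max p q)"
      unfolding monomials_def by auto
    then show "qcoeff M A m = 0" using H by (simp add: qcoeff_eq_0_iff)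
  qed
qed

lemma contains_flagsp_iff:
  "sym6 A \<Longrightarrow> M \<in> carrier_mat 6 6 \<Longrightarrow>
    contains A (flagsp M j) \<longleftrightarrow> (\<forall>m\<in>monomials. snd m \<le> j \<longrightarrow> qcoeff M A m = 0)"
  by (simp add: contains_flagsp_iff_entries qcoeff_monomials_eq_0_iff)

lemma sing_along_flagsp_iff:
  "sym6 A \<Longrightarrow> M \<in> carrier_mat 6 6 \<Longrightarrow> invertible_mat M \<Longrightarrow>
    sing_along A (flagsp M j) \<longleftrightarrow> (\<forall>m\<in>monomials. fst m \<le> j \<longrightarrow> qcoeff M A m = 0)"
  by (simp add: sing_along_flagsp_iff_entries qcoeff_monomials_eq_0_iff)

lemma eq_0_if_qcoeff_eq_0:
  assumes S: "sym6 A" and M: "M \<in> carrier_mat 6 6" and I: "invertible_mat M"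
    and H: "\<forall>m\<in>monomials. qcoeff M A m = 0"
  shows "A = 0\<^sub>m 6 6"
proof -
  have A: "A \<in> carrier_mat 6 6" using S by (simp add: sym6_def)
  obtain N where N: "N \<in> carrier_mat 6 6" "M * N = 1\<^sub>m 6"
    using invertible_mat_obtain_inverse[OF M I] by blast
  have "sing_along A (flagsp M 5)" using sing_along_flagsp_iff[OF S M I] H by blast
  moreover have "M *\<^sub>v x \<in> flagsp M 5" if "x \<in> carrier_vec 6" for x
    using that unfolding flagsp_def by auto
  ultimately have "A *\<^sub>v (M *\<^sub>v x) = 0\<^sub>v 6" if "x \<in> carrier_vec 6" for x
    using that unfolding sing_along_def by blast
  moreover have "M *\<^sub>v (N *\<^sub>v unit_vec 6 k) = unit_vec 6 k" for k
    using M N by (simp add: assoc_mult_mat_vec[symmetric, of _ 6 6 _ 6])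
  ultimately have col: "A *\<^sub>v unit_vec 6 k = 0\<^sub>v 6" for k
    using N(1) by (metis mult_mat_vec_carrier unit_vec_carrier)
  show ?thesis
  proof (rule eq_matI)
    fix i k assume "i < dim_row (0\<^sub>m 6 6 :: complex mat)" "k < dim_col (0\<^sub>m 6 6 :: complex mat)"
    then have "i < 6" "k < 6" by simp_all
    then have "(A *\<^sub>v unit_vec 6 k) $ i = 0" using col[of k] by simp
    then show "A $$ (i, k) = 0\<^sub>m 6 6 $$ (i, k)" using A \<open>i < 6\<close> \<open>k < 6\<close> by simp
  qed (use A in auto)
qed

section \<open>Pluecker coordinates and weights\<close>

lemma det_mat_3:
  "det (mat 3 3 f :: 'a :: comm_ring_1 mat) =
     f (0,0) * (f (1,1) * f (2,2) - f (1,2) * f (2,1))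
   - f (0,1) * (f (1,0) * f (2,2) - f (1,2) * f (2,0))
   + f (0,2) * (f (1,0) * f (2,1) - f (1,1) * f (2,0))"
proof -
  have det0: "det (mat 0 0 g) = 1" for g :: "nat \<times> nat \<Rightarrow> 'a"
    by (rule det_dim_zero) auto
  have det1: "det (mat (Suc 0) (Suc 0) g) = g (0,0)" for g :: "nat \<times> nat \<Rightarrow> 'a"
    by (subst laplace_expansion_row[of _ 1 0]) (auto simp: cofactor_def mat_delete_def det0)
  have det2: "det (mat (Suc (Suc 0)) (Suc (Suc 0)) g) = g (0,0) * g (1,1) - g (0,1) * g (1,0)"
    for g :: "nat \<times> nat \<Rightarrow> 'a"
    by (subst laplace_expansion_row[of _ "Suc (Suc 0)" 0])
      (simp_all add: cofactor_def numeral_2_eq_2 lessThan_Suc mat_delete_def det1)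
  show ?thesis
    by (subst laplace_expansion_row[of _ 3 0])
      (simp_all add: cofactor_def numeral_3_eq_3 lessThan_Suc mat_delete_def det2 algebra_simps
        numeral_2_eq_2)
qed

definition qcoeff_col :: "complex mat \<Rightarrow> complex mat \<Rightarrow> complex mat \<Rightarrow> complex mat \<Rightarrow> nat \<times> nat \<Rightarrow> cvec3"
  where "qcoeff_col M Q1 Q2 Q3 m = (\<lambda>k. qcoeff M ([Q1, Q2, Q3] ! k) m)"

lemma plucker_eq_triple:
  "plucker M Q1 Q2 Q3 m1 m2 m3 =
    triple (qcoeff_col M Q1 Q2 Q3 m1) (qcoeff_col M Q1 Q2 Q3 m2) (qcoeff_col M Q1 Q2 Q3 m3)"
  unfolding plucker_def det_mat_3
  by (simp add: qcoeff_col_def triple_def dot3_def cross3_def algebra_simps numeral_2_eq_2)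

lemma not_stable_wrt_iff_weight_unstable:
  "\<not> stable_wrt a M Q1 Q2 Q3 \<longleftrightarrow> weight_unstable (qcoeff_col M Q1 Q2 Q3) monomials (mweight a)"
proof -
  have "triple (qcoeff_col M Q1 Q2 Q3 x) (qcoeff_col M Q1 Q2 Q3 y) (qcoeff_col M Q1 Q2 Q3 z) = 0"
    if "\<not> distinct [x, y, z]" for x y z
    using that by auto
  then show ?thesis
    unfolding stable_wrt_def weight_unstable_def plucker_eq_triple by blast
qed

lemma mweight_two_blocks:
  assumes "(p, q) \<in> monomials" "j < 6"
  shows "mweight (replicate (Suc j) \<alpha> @ replicate (5 - j) \<beta>) (p, q) =
    (if q \<le> j then 2 * \<alpha> else if p \<le> j then \<alpha> + \<beta> else 2 * \<beta>)"
proof -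
  have "(replicate (Suc j) \<alpha> @ replicate (5 - j) \<beta>) ! i = (if i \<le> j then \<alpha> else \<beta>)" if "i < 6" for i
    using that assms(2) by (simp add: nth_append del: replicate_Suc)
  then show ?thesis using assms(1) by (auto simp: mweight_def monomials_def)
qed

lemma mweight_two_blocks_sets:
  assumes a: "a = replicate (Suc j) \<alpha> @ replicate (5 - j) \<beta>" and "j < 6" "\<beta> < \<alpha>"
    and hi: "hi = 2 * \<alpha>" and mid: "mid = \<alpha> + \<beta>" and lo: "lo = 2 * \<beta>"
  shows "\<forall>m\<in>monomials. mweight a m = hi \<or> mweight a m = mid \<or> mweight a m = lo"
    and "{m\<in>monomials. mweight a m = hi} = {m\<in>monomials. snd m \<le> j}"
    and "{m\<in>monomials. mid \<le> mweight a m} = {m\<in>monomials. fst m \<le> j}"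
proof -
  have w: "mweight a m = (if snd m \<le> j then hi else if fst m \<le> j then mid else lo)"
    if "m \<in> monomials" for m
    using mweight_two_blocks[of "fst m" "snd m" j \<alpha> \<beta>] that assms(2) unfolding a hi mid lo by simp
  show "\<forall>m\<in>monomials. mweight a m = hi \<or> mweight a m = mid \<or> mweight a m = lo"
    using w by simp
  show "{m\<in>monomials. mweight a m = hi} = {m\<in>monomials. snd m \<le> j}"
    using w assms(3) unfolding hi mid lo by (auto split: if_splits)
  show "{m\<in>monomials. mid \<le> mweight a m} = {m\<in>monomials. fst m \<le> j}"
    using w assms(3) unfolding hi mid lo by (fastforce simp: monomials_def split: if_splits)
qed

section \<open>The net spanned by three quadrics\<close>

locale net =
  fixes Q1 Q2 Q3 :: "complex mat"
  assumes sym: "sym6 Q1" "sym6 Q2" "sym6 Q3" and indep: "indep3 Q1 Q2 Q3"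
begin

definition quadric :: "cvec3 \<Rightarrow> complex mat" where
  "quadric w = w 0 \<cdot>\<^sub>m Q1 + w 1 \<cdot>\<^sub>m Q2 + w 2 \<cdot>\<^sub>m Q3"

abbreviation col :: "complex mat \<Rightarrow> nat \<times> nat \<Rightarrow> cvec3" where
  "col M \<equiv> qcoeff_col M Q1 Q2 Q3"

lemma carrier: "Q1 \<in> carrier_mat 6 6" "Q2 \<in> carrier_mat 6 6" "Q3 \<in> carrier_mat 6 6"
  using sym by (auto simp: sym6_def)

lemma quadric_carrier: "quadric w \<in> carrier_mat 6 6"
  using carrier by (simp add: quadric_def)

lemma quadric_dim [simp]: "dim_row (quadric w) = 6" "dim_col (quadric w) = 6"
  using quadric_carrier by auto

lemma quadric_index:
  "i < 6 \<Longrightarrow> j < 6 \<Longrightarrow>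
    quadric w $$ (i, j) = w 0 * Q1 $$ (i, j) + w 1 * Q2 $$ (i, j) + w 2 * Q3 $$ (i, j)"
  using carrier by (simp add: quadric_def)

lemma quadric_sym: "sym6 (quadric w)"
proof -
  have "Q $$ (i, j) = Q $$ (j, i)" if "sym6 Q" "i < 6" "j < 6" for Q i j
    using that by (metis index_transpose_mat(1) carrier_matD sym6_def)
  then have "quadric w $$ (j, i) = quadric w $$ (i, j)" if "i < 6" "j < 6" for i j
    using that sym by (simp add: quadric_index)
  then show ?thesis
    unfolding sym6_def using quadric_carrier by (auto intro!: eq_matI)
qed

lemma quadric_eq_0_iff: "quadric w = 0\<^sub>m 6 6 \<longleftrightarrow> \<not> nonzero3 w"
proof
  assume "quadric w = 0\<^sub>m 6 6"
  then show "\<not> nonzero3 w" using indep unfolding indep3_def quadric_def nonzero3_def by blast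
next
  assume "\<not> nonzero3 w"
  then show "quadric w = 0\<^sub>m 6 6"
    using quadric_carrier by (intro eq_matI) (auto simp: quadric_index nonzero3_def)
qed

lemma lincomb3_quadric: "a \<cdot>\<^sub>m quadric w + b \<cdot>\<^sub>m quadric w' = quadric (lincomb3 a w b w')"
  using quadric_carrier
  by (intro eq_matI) (auto simp: quadric_index lincomb3_def algebra_simps)

lemma span3_eq: "span3 Q1 Q2 Q3 = range quadric"
proof
  show "span3 Q1 Q2 Q3 \<subseteq> range quadric"
  proof
    fix A assume "A \<in> span3 Q1 Q2 Q3"
    then obtain a b c where "A = a \<cdot>\<^sub>m Q1 + b \<cdot>\<^sub>m Q2 + c \<cdot>\<^sub>m Q3" unfolding span3_def by blast
    then have "A = quadric (\<lambda>i. if i = 0 then a else if i = 1 then b else c)"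
      by (simp add: quadric_def)
    then show "A \<in> range quadric" by blast
  qed
qed (auto simp: span3_def quadric_def)

lemma qcoeff_quadric:
  assumes M: "M \<in> carrier_mat 6 6" and m: "m \<in> monomials"
  shows "qcoeff M (quadric w) m = dot3 w (col M m)"
proof -
  have entry: "base_change M A $$ (p, q) = (\<Sum>i<6. M $$ (i, p) * (\<Sum>k<6. A $$ (i, k) * M $$ (k, q)))"
    if "A \<in> carrier_mat 6 6" "p < 6" "q < 6" for A p q
    using M that by (simp add: base_change_def scalar_prod_def atLeast0LessThan)
  obtain p q where pq: "m = (p, q)" "p < 6" "q < 6" using m unfolding monomials_def by auto
  have "base_change M (quadric w) $$ (p, q) = (\<Sum>i<6. M $$ (i, p) *
      (\<Sum>k<6. (w 0 * Q1 $$ (i, k) + w 1 * Q2 $$ (i, k) + w 2 * Q3 $$ (i, k)) * M $$ (k, q)))"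
    using pq by (simp add: entry quadric_carrier quadric_index)
  also have "\<dots> = w 0 * (\<Sum>i<6. M $$ (i, p) * (\<Sum>k<6. Q1 $$ (i, k) * M $$ (k, q)))
      + w 1 * (\<Sum>i<6. M $$ (i, p) * (\<Sum>k<6. Q2 $$ (i, k) * M $$ (k, q)))
      + w 2 * (\<Sum>i<6. M $$ (i, p) * (\<Sum>k<6. Q3 $$ (i, k) * M $$ (k, q)))"
    by (simp add: sum_distrib_left sum.distrib algebra_simps)
  also have "\<dots> = w 0 * base_change M Q1 $$ (p, q) + w 1 * base_change M Q2 $$ (p, q)
      + w 2 * base_change M Q3 $$ (p, q)"
    using pq carrier by (simp add: entry)
  finally show ?thesis using pq
    by (simp add: qcoeff_def base_change_def qcoeff_col_def dot3_def algebra_simps numeral_2_eq_2)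
qed

lemma spanning_col:
  assumes "M \<in> carrier_mat 6 6" "invertible_mat M"
  shows "spanning (col M) monomials"
  unfolding spanning_def
proof (intro allI impI notI)
  fix n assume "nonzero3 n" "annihilates n (col M) monomials"
  then have "\<forall>m\<in>monomials. qcoeff M (quadric n) m = 0"
    using qcoeff_quadric[OF assms(1)] unfolding annihilates_def by simp
  then have "quadric n = 0\<^sub>m 6 6" using eq_0_if_qcoeff_eq_0[OF quadric_sym assms] by blast
  then show False using \<open>nonzero3 n\<close> quadric_eq_0_iff by blast
qed

lemma contains_quadric_iff:
  "M \<in> carrier_mat 6 6 \<Longrightarrow>
    contains (quadric w) (flagsp M j) \<longleftrightarrow> annihilates w (col M) {m\<in>monomials. snd m \<le> j}"
  unfolding contains_flagsp_iff[OF quadric_sym] annihilates_def using qcoeff_quadric by auto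

lemma sing_along_quadric_iff:
  "M \<in> carrier_mat 6 6 \<Longrightarrow> invertible_mat M \<Longrightarrow>
    sing_along (quadric w) (flagsp M j) \<longleftrightarrow> annihilates w (col M) {m\<in>monomials. fst m \<le> j}"
  unfolding sing_along_flagsp_iff[OF quadric_sym] annihilates_def using qcoeff_quadric by auto

lemma elem_span3_iff: "elem A (span3 Q1 Q2 Q3) \<longleftrightarrow> (\<exists>w. nonzero3 w \<and> A = quadric w)"
  unfolding elem_def span3_eq using quadric_eq_0_iff by auto

definition pencil :: "cvec3 \<Rightarrow> cvec3 \<Rightarrow> complex mat set" where
  "pencil w w' = {quadric (lincomb3 a w b w') | a b. True}"

lemma pencil_in_iff:
  "pencil_in (span3 Q1 Q2 Q3) P \<longleftrightarrow> (\<exists>w w'. nonzero3 (cross3 w w') \<and> P = pencil w w')"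
proof -
  have "span2 (quadric w) (quadric w') = pencil w w'" for w w'
    unfolding span2_def pencil_def lincomb3_quadric by blast
  moreover have "(\<forall>a b. a \<cdot>\<^sub>m quadric w + b \<cdot>\<^sub>m quadric w' = 0\<^sub>m 6 6 \<longrightarrow> a = 0 \<and> b = 0)
      \<longleftrightarrow> nonzero3 (cross3 w w')" for w w'
    unfolding lincomb3_quadric quadric_eq_0_iff nonzero3_cross3_iff_independent ..
  ultimately show ?thesis
    unfolding pencil_in_def span3_eq by auto
qed

lemma quadric_mem_pencil: "quadric w \<in> pencil w w'" "quadric w' \<in> pencil w w'"
proof -
  have "lincomb3 1 w 0 w' = w" "lincomb3 0 w 1 w' = w'" by (simp_all add: lincomb3_def)
  then show "quadric w \<in> pencil w w'" "quadric w' \<in> pencil w w'"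
    unfolding pencil_def by (metis (mono_tags, lifting) mem_Collect_eq)+
qed

lemma ball_pencil_iff:
  assumes cond: "\<And>w. cond (quadric w) \<longleftrightarrow> annihilates w g S"
  shows "(\<forall>A\<in>pencil w w'. cond A) \<longleftrightarrow> annihilates w g S \<and> annihilates w' g S"
proof
  assume "\<forall>A\<in>pencil w w'. cond A"
  then show "annihilates w g S \<and> annihilates w' g S"
    using quadric_mem_pencil cond by blast
next
  assume "annihilates w g S \<and> annihilates w' g S"
  then have "annihilates (lincomb3 a w b w') g S" for a b
    using annihilates_lincomb3 by blast
  then show "\<forall>A\<in>pencil w w'. cond A" by (auto simp: pencil_def cond)
qed

lemma elem_pencil_iff:
  "elem A (pencil w w') \<longleftrightarrow> (\<exists>a b. nonzero3 (lincomb3 a w b w') \<and> A = quadric (lincomb3 a w b w'))"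
  unfolding elem_def pencil_def using quadric_eq_0_iff by auto

lemma ball_span3_iff_vanishes_on:
  assumes cond: "\<And>w. cond (quadric w) \<longleftrightarrow> annihilates w g S"
  shows "(\<forall>A\<in>span3 Q1 Q2 Q3. cond A) \<longleftrightarrow> vanishes_on g S"
  unfolding span3_eq all_annihilates_iff_vanishes_on[symmetric] by (simp add: cond)

lemma ex_elem_span3_iff_annihilated:
  assumes cond: "\<And>w. cond (quadric w) \<longleftrightarrow> annihilates w g S"
  shows "(\<exists>A. elem A (span3 Q1 Q2 Q3) \<and> cond A) \<longleftrightarrow> annihilated g S"
  unfolding elem_span3_iff annihilated_def by (auto simp: cond)

lemma ex_pencil_iff_pencil_annihilated:
  assumes cond: "\<And>w. cond (quadric w) \<longleftrightarrow> annihilates w g S"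
  shows "(\<exists>P. pencil_in (span3 Q1 Q2 Q3) P \<and> (\<forall>A\<in>P. cond A)) \<longleftrightarrow> pencil_annihilated g S"
proof
  assume "\<exists>P. pencil_in (span3 Q1 Q2 Q3) P \<and> (\<forall>A\<in>P. cond A)"
  then obtain w w' where "nonzero3 (cross3 w w')" "\<forall>A\<in>pencil w w'. cond A"
    unfolding pencil_in_iff by blast
  then show "pencil_annihilated g S"
    unfolding pencil_annihilated_def ball_pencil_iff[OF cond] by blast
next
  assume "pencil_annihilated g S"
  then obtain w w' where "nonzero3 (cross3 w w')" "annihilates w g S" "annihilates w' g S"
    unfolding pencil_annihilated_def by blast
  then have "pencil_in (span3 Q1 Q2 Q3) (pencil w w')" "\<forall>A\<in>pencil w w'. cond A"
    unfolding pencil_in_iff ball_pencil_iff[OF cond] by blast+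
  then show "\<exists>P. pencil_in (span3 Q1 Q2 Q3) P \<and> (\<forall>A\<in>P. cond A)" by blast
qed

lemma ex_pencil_elem_iff_pencil_annihilated_with:
  assumes cond: "\<And>w. cond (quadric w) \<longleftrightarrow> annihilates w g S"
    and cond': "\<And>w. cond' (quadric w) \<longleftrightarrow> annihilates w g T"
  shows "(\<exists>P. pencil_in (span3 Q1 Q2 Q3) P \<and> (\<forall>A\<in>P. cond A) \<and> (\<exists>A. elem A P \<and> cond' A))
    \<longleftrightarrow> pencil_annihilated_with g S T"
proof
  assume "\<exists>P. pencil_in (span3 Q1 Q2 Q3) P \<and> (\<forall>A\<in>P. cond A) \<and> (\<exists>A. elem A P \<and> cond' A)"
  then obtain w w' A where ww: "nonzero3 (cross3 w w')" "\<forall>A\<in>pencil w w'. cond A"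
    and "elem A (pencil w w')" "cond' A"
    unfolding pencil_in_iff by blast
  then obtain a b where "nonzero3 (lincomb3 a w b w')" "cond' (quadric (lincomb3 a w b w'))"
    unfolding elem_pencil_iff by blast
  with ww show "pencil_annihilated_with g S T"
    unfolding pencil_annihilated_with_def ball_pencil_iff[OF cond] cond' by blast
next
  assume "pencil_annihilated_with g S T"
  then obtain w w' a b where "nonzero3 (cross3 w w')" "annihilates w g S" "annihilates w' g S"
    "nonzero3 (lincomb3 a w b w')" "annihilates (lincomb3 a w b w') g T"
    unfolding pencil_annihilated_with_def by blast
  then have "pencil_in (span3 Q1 Q2 Q3) (pencil w w')" "\<forall>A\<in>pencil w w'. cond A"
    "elem (quadric (lincomb3 a w b w')) (pencil w w')" "cond' (quadric (lincomb3 a w b w'))"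
    unfolding pencil_in_iff ball_pencil_iff[OF cond] elem_pencil_iff cond' by blast+
  then show "\<exists>P. pencil_in (span3 Q1 Q2 Q3) P \<and> (\<forall>A\<in>P. cond A) \<and> (\<exists>A. elem A P \<and> cond' A)"
    by blast
qed

lemma not_stable_rho1_iff:
  assumes M: "M \<in> carrier_mat 6 6"
  shows "\<not> stable_wrt [1,1,1,1,1,-5] M Q1 Q2 Q3 \<longleftrightarrow>
    (\<exists>A. elem A (span3 Q1 Q2 Q3) \<and> contains A (flagsp M 4))"
proof -
  have W: "\<forall>m\<in>monomials. mweight [1,1,1,1,1,-5] m = 2 \<or>
      mweight [1,1,1,1,1,-5] m = -4 \<or> mweight [1,1,1,1,1,-5] m = -10"
    and S: "{m\<in>monomials. mweight [1,1,1,1,1,-5] m = 2} = {m\<in>monomials. snd m \<le> 4}"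
    by (rule mweight_two_blocks_sets[where j = 4 and \<alpha> = 1 and \<beta> = "-5"];
        simp add: numeral_eq_Suc)+
  have "(\<exists>A. elem A (span3 Q1 Q2 Q3) \<and> contains A (flagsp M 4))
      \<longleftrightarrow> annihilated (col M) {m\<in>monomials. snd m \<le> 4}"
    by (rule ex_elem_span3_iff_annihilated) (rule contains_quadric_iff[OF M])
  then show ?thesis
    unfolding not_stable_wrt_iff_weight_unstable weight_unstable_rho1_iff[OF W] S by blast
qed

lemma not_stable_rho2_iff:
  assumes M: "M \<in> carrier_mat 6 6" and I: "invertible_mat M"
  shows "\<not> stable_wrt [1,1,1,1,-2,-2] M Q1 Q2 Q3 \<longleftrightarrow>
    (\<exists>P. pencil_in (span3 Q1 Q2 Q3) P \<and> (\<forall>A\<in>P. contains A (flagsp M 3)))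
    \<or> (\<exists>A. elem A (span3 Q1 Q2 Q3) \<and> sing_along A (flagsp M 3))"
proof -
  have W: "\<forall>m\<in>monomials. mweight [1,1,1,1,-2,-2] m = 2 \<or>
      mweight [1,1,1,1,-2,-2] m = -1 \<or> mweight [1,1,1,1,-2,-2] m = -4"
    and S: "{m\<in>monomials. mweight [1,1,1,1,-2,-2] m = 2} = {m\<in>monomials. snd m \<le> 3}"
    and T: "{m\<in>monomials. -1 \<le> mweight [1,1,1,1,-2,-2] m} = {m\<in>monomials. fst m \<le> 3}"
    by (rule mweight_two_blocks_sets[where j = 3 and \<alpha> = 1 and \<beta> = "-2"];
        simp add: numeral_eq_Suc)+
  have "(\<exists>P. pencil_in (span3 Q1 Q2 Q3) P \<and> (\<forall>A\<in>P. contains A (flagsp M 3)))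
      \<longleftrightarrow> pencil_annihilated (col M) {m\<in>monomials. snd m \<le> 3}"
    by (rule ex_pencil_iff_pencil_annihilated) (rule contains_quadric_iff[OF M])
  moreover have "(\<exists>A. elem A (span3 Q1 Q2 Q3) \<and> sing_along A (flagsp M 3))
      \<longleftrightarrow> annihilated (col M) {m\<in>monomials. fst m \<le> 3}"
    by (rule ex_elem_span3_iff_annihilated) (rule sing_along_quadric_iff[OF M I])
  ultimately show ?thesis
    unfolding not_stable_wrt_iff_weight_unstable weight_unstable_rho2_iff[OF W]
      S T by blast
qed

lemma not_stable_rho3_iff:
  assumes M: "M \<in> carrier_mat 6 6" and I: "invertible_mat M"
  shows "\<not> stable_wrt [1,1,1,-1,-1,-1] M Q1 Q2 Q3 \<longleftrightarrow>
    (\<forall>A\<in>span3 Q1 Q2 Q3. contains A (flagsp M 2))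
    \<or> (\<exists>P. pencil_in (span3 Q1 Q2 Q3) P \<and> (\<forall>A\<in>P. contains A (flagsp M 2))
          \<and> (\<exists>A. elem A P \<and> sing_along A (flagsp M 2)))"
proof -
  have W: "\<forall>m\<in>monomials. mweight [1,1,1,-1,-1,-1] m = 2 \<or>
      mweight [1,1,1,-1,-1,-1] m = 0 \<or> mweight [1,1,1,-1,-1,-1] m = -2"
    and S: "{m\<in>monomials. mweight [1,1,1,-1,-1,-1] m = 2} = {m\<in>monomials. snd m \<le> 2}"
    and T: "{m\<in>monomials. 0 \<le> mweight [1,1,1,-1,-1,-1] m} = {m\<in>monomials. fst m \<le> 2}"
    by (rule mweight_two_blocks_sets[where j = 2 and \<alpha> = 1 and \<beta> = "-1"];
        simp add: numeral_eq_Suc)+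
  have "(\<forall>A\<in>span3 Q1 Q2 Q3. contains A (flagsp M 2)) \<longleftrightarrow> vanishes_on (col M) {m\<in>monomials. snd m \<le> 2}"
    by (rule ball_span3_iff_vanishes_on) (rule contains_quadric_iff[OF M])
  moreover have "(\<exists>P. pencil_in (span3 Q1 Q2 Q3) P \<and> (\<forall>A\<in>P. contains A (flagsp M 2))
        \<and> (\<exists>A. elem A P \<and> sing_along A (flagsp M 2)))
      \<longleftrightarrow> pencil_annihilated_with (col M) {m\<in>monomials. snd m \<le> 2} {m\<in>monomials. fst m \<le> 2}"
    by (rule ex_pencil_elem_iff_pencil_annihilated_with)
      (rule contains_quadric_iff[OF M], rule sing_along_quadric_iff[OF M I])
  ultimately show ?thesis
    unfolding not_stable_wrt_iff_weight_unstable
      weight_unstable_rho3_iff[OF W spanning_col[OF M I]] S T by blast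
qed

lemma not_stable_rho4_iff:
  assumes M: "M \<in> carrier_mat 6 6" and I: "invertible_mat M"
  shows "\<not> stable_wrt [2,2,-1,-1,-1,-1] M Q1 Q2 Q3 \<longleftrightarrow>
    ((\<forall>A\<in>span3 Q1 Q2 Q3. contains A (flagsp M 1))
      \<and> (\<exists>A. elem A (span3 Q1 Q2 Q3) \<and> sing_along A (flagsp M 1)))
    \<or> (\<exists>P. pencil_in (span3 Q1 Q2 Q3) P \<and> (\<forall>A\<in>P. sing_along A (flagsp M 1)))"
proof -
  have W: "\<forall>m\<in>monomials. mweight [2,2,-1,-1,-1,-1] m = 4 \<or>
      mweight [2,2,-1,-1,-1,-1] m = 1 \<or> mweight [2,2,-1,-1,-1,-1] m = -2"
    and S: "{m\<in>monomials. mweight [2,2,-1,-1,-1,-1] m = 4} = {m\<in>monomials. snd m \<le> 1}"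
    and T: "{m\<in>monomials. 1 \<le> mweight [2,2,-1,-1,-1,-1] m} = {m\<in>monomials. fst m \<le> 1}"
    by (rule mweight_two_blocks_sets[where j = 1 and \<alpha> = 2 and \<beta> = "-1"];
        simp add: numeral_eq_Suc)+
  have "(\<forall>A\<in>span3 Q1 Q2 Q3. contains A (flagsp M 1)) \<longleftrightarrow> vanishes_on (col M) {m\<in>monomials. snd m \<le> 1}"
    by (rule ball_span3_iff_vanishes_on) (rule contains_quadric_iff[OF M])
  moreover have "(\<exists>A. elem A (span3 Q1 Q2 Q3) \<and> sing_along A (flagsp M 1))
      \<longleftrightarrow> annihilated (col M) {m\<in>monomials. fst m \<le> 1}"
    by (rule ex_elem_span3_iff_annihilated) (rule sing_along_quadric_iff[OF M I])
  moreover have "(\<exists>P. pencil_in (span3 Q1 Q2 Q3) P \<and> (\<forall>A\<in>P. sing_along A (flagsp M 1)))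
      \<longleftrightarrow> pencil_annihilated (col M) {m\<in>monomials. fst m \<le> 1}"
    by (rule ex_pencil_iff_pencil_annihilated) (rule sing_along_quadric_iff[OF M I])
  ultimately show ?thesis
    unfolding not_stable_wrt_iff_weight_unstable
      weight_unstable_rho4_iff[OF W spanning_col[OF M I]] S T by blast
qed

lemma not_stable_rho5_iff:
  assumes M: "M \<in> carrier_mat 6 6" and I: "invertible_mat M"
  shows "\<not> stable_wrt [5,-1,-1,-1,-1,-1] M Q1 Q2 Q3 \<longleftrightarrow>
    (\<forall>A\<in>span3 Q1 Q2 Q3. contains A (flagsp M 0))
    \<and> (\<exists>P. pencil_in (span3 Q1 Q2 Q3) P \<and> (\<forall>A\<in>P. sing_along A (flagsp M 0)))"
proof -
  have W: "\<forall>m\<in>monomials. mweight [5,-1,-1,-1,-1,-1] m = 10 \<or>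
      mweight [5,-1,-1,-1,-1,-1] m = 4 \<or> mweight [5,-1,-1,-1,-1,-1] m = -2"
    and S: "{m\<in>monomials. mweight [5,-1,-1,-1,-1,-1] m = 10} = {m\<in>monomials. snd m \<le> 0}"
    and T: "{m\<in>monomials. 4 \<le> mweight [5,-1,-1,-1,-1,-1] m} = {m\<in>monomials. fst m \<le> 0}"
    by (rule mweight_two_blocks_sets[where j = 0 and \<alpha> = 5 and \<beta> = "-1"];
        simp add: numeral_eq_Suc)+
  have "(\<forall>A\<in>span3 Q1 Q2 Q3. contains A (flagsp M 0)) \<longleftrightarrow> vanishes_on (col M) {m\<in>monomials. snd m \<le> 0}"
    by (rule ball_span3_iff_vanishes_on) (rule contains_quadric_iff[OF M])
  moreover have "(\<exists>P. pencil_in (span3 Q1 Q2 Q3) P \<and> (\<forall>A\<in>P. sing_along A (flagsp M 0)))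
      \<longleftrightarrow> pencil_annihilated (col M) {m\<in>monomials. fst m \<le> 0}"
    by (rule ex_pencil_iff_pencil_annihilated) (rule sing_along_quadric_iff[OF M I])
  ultimately show ?thesis
    unfolding not_stable_wrt_iff_weight_unstable
      weight_unstable_rho5_iff[OF W spanning_col[OF M I]] S T by blast
qed

end

theorem lemma2p2:
  fixes Q1 Q2 Q3 :: "complex mat"
  assumes "sym6 Q1" and "sym6 Q2" and "sym6 Q3" and "indep3 Q1 Q2 Q3"
  defines "\<Lambda> \<equiv> span3 Q1 Q2 Q3"
  shows
   "(not_stable_some_1PS [1,1,1,1,1,-5] Q1 Q2 Q3 \<longleftrightarrow>
      has_flag (\<lambda>F. \<exists>A. elem A \<Lambda> \<and> contains A (F 4)))
  \<and> (not_stable_some_1PS [1,1,1,1,-2,-2] Q1 Q2 Q3 \<longleftrightarrow>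
      has_flag (\<lambda>F. (\<exists>P. pencil_in \<Lambda> P \<and> (\<forall>A\<in>P. contains A (F 3)))
                   \<or> (\<exists>A. elem A \<Lambda> \<and> sing_along A (F 3))))
  \<and> (not_stable_some_1PS [1,1,1,-1,-1,-1] Q1 Q2 Q3 \<longleftrightarrow>
      has_flag (\<lambda>F. (\<forall>A\<in>\<Lambda>. contains A (F 2))
                   \<or> (\<exists>P. pencil_in \<Lambda> P \<and> (\<forall>A\<in>P. contains A (F 2))
                         \<and> (\<exists>A. elem A P \<and> sing_along A (F 2)))))
  \<and> (not_stable_some_1PS [2,2,-1,-1,-1,-1] Q1 Q2 Q3 \<longleftrightarrow>
      has_flag (\<lambda>F. ((\<forall>A\<in>\<Lambda>. contains A (F 1)) \<and> (\<exists>A. elem A \<Lambda> \<and> sing_along A (F 1)))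
                   \<or> (\<exists>P. pencil_in \<Lambda> P \<and> (\<forall>A\<in>P. sing_along A (F 1)))))
  \<and> (not_stable_some_1PS [5,-1,-1,-1,-1,-1] Q1 Q2 Q3 \<longleftrightarrow>
      has_flag (\<lambda>F. (\<forall>A\<in>\<Lambda>. contains A (F 0))
                   \<and> (\<exists>P. pencil_in \<Lambda> P \<and> (\<forall>A\<in>P. sing_along A (F 0)))))"
proof -
  interpret net Q1 Q2 Q3 using assms(1-4) by (rule net.intro)
  show ?thesis
    unfolding \<Lambda>_def not_stable_some_1PS_def has_flag_def
    by (intro conjI bex_cong conj_cong refl)
      (simp_all add: not_stable_rho1_iff not_stable_rho2_iff not_stable_rho3_iff
        not_stable_rho4_iff not_stable_rho5_iff)
qed

end
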